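(* Let $U$ be an infinite uniquely $2$-divisible group, $\nu$ an involutory almost regular automorphism of $U$, and let $A$ be an infinite abelian subgroup of $U$ which is inverted by $\nu$ and maximal (with respect to inclusion) among abelian subgroups of $U$ inverted by $\nu$. Let $B$ be a finitely generated abelian subgroup of $U$ which is inverted by $\nu$. Then $A$ contains a subgroup $A_1$ of finite index such that $\langle A_1,B\rangle$ is abelian.
   Context: An automorphism $\nu$ is involutory if $\nu\ne\mathrm{id}$ and $\nu^2=\mathrm{id}$, and almost regular if $C_U(\nu)$ is finite. A group is uniquely $2$-divisible if every element has a unique square root. A subgroup is inverted by $\nu$ if $x^\nu=x^{-1}$ for all its elements $x$. *)

theory Defs
  imports "HOL-Algebra.Algebra"
begin

definition uniquely_2_divisible :: "('a, 'b) monoid_scheme \<Rightarrow> bool" where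
  "uniquely_2_divisible G \<longleftrightarrow>
     (\<forall>x \<in> carrier G. \<exists>!y. y \<in> carrier G \<and> y \<otimes>\<^bsub>G\<^esub> y = x)"

definition involutory_aut :: "('a, 'b) monoid_scheme \<Rightarrow> ('a \<Rightarrow> 'a) \<Rightarrow> bool" where
  "involutory_aut G \<nu> \<longleftrightarrow> \<nu> \<in> iso G G
     \<and> (\<exists>x \<in> carrier G. \<nu> x \<noteq> x)
     \<and> (\<forall>x \<in> carrier G. \<nu> (\<nu> x) = x)"

definition almost_regular :: "('a, 'b) monoid_scheme \<Rightarrow> ('a \<Rightarrow> 'a) \<Rightarrow> bool" where
  "almost_regular G \<nu> \<longleftrightarrow> finite {x \<in> carrier G. \<nu> x = x}"

definition inverted_by :: "('a, 'b) monoid_scheme \<Rightarrow> ('a \<Rightarrow> 'a) \<Rightarrow> 'a set \<Rightarrow> bool" where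
  "inverted_by G \<nu> H \<longleftrightarrow> (\<forall>x \<in> H. \<nu> x = inv\<^bsub>G\<^esub> x)"

definition abelian_subgroup :: "'a set \<Rightarrow> ('a, 'b) monoid_scheme \<Rightarrow> bool" where
  "abelian_subgroup H G \<longleftrightarrow> subgroup H G
     \<and> (\<forall>x \<in> H. \<forall>y \<in> H. x \<otimes>\<^bsub>G\<^esub> y = y \<otimes>\<^bsub>G\<^esub> x)"

definition finitely_generated_subgroup :: "'a set \<Rightarrow> ('a, 'b) monoid_scheme \<Rightarrow> bool" where
  "finitely_generated_subgroup H G \<longleftrightarrow>
     (\<exists>S. finite S \<and> S \<subseteq> carrier G \<and> H = generate G S)"

definition finite_index_in :: "'a set \<Rightarrow> 'a set \<Rightarrow> ('a, 'b) monoid_scheme \<Rightarrow> bool" where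
  "finite_index_in H K G \<longleftrightarrow> finite {H #>\<^bsub>G\<^esub> a | a. a \<in> K}"

end

theory Submission
  imports Defs
begin

(* The key fact is that for every b inverted by nu the centralizer C_A(b) of b in A has finite
   index in A.  By unique 2-divisibility every a * b is uniquely x * c with nu x = inv x and
   nu c = c; expanding nu (x) = inv x shows that a satisfies the twisted commutation
   (inv b * inv c) * a = a * (c * inv b).  For c = 1 this says a is in C_A(b); for c /= 1 the
   solutions form a right coset of the centralizer of inv b * inv c in A which does not contain
   that centralizer.  Since nu has only finitely many fixed points c, A is covered by C_A(b)
   together with finitely many such proper cosets, and B. Neumann's lemma on coverings of a
   group by finitely many cosets forces C_A(b) to have finite index.  Taking A1 to be the
   intersection of the centralizers in A of a finite generating set of B finishes the proof. *)


text \<open>\<open>H\<close> is the union of finitely many right cosets of \<open>K\<close> with representatives in \<open>H\<close>;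
  for subgroups \<open>K \<subseteq> H\<close> this is the statement that \<open>K\<close> has finite index in \<open>H\<close>.\<close>

definition finitely_covered :: "('a, 'b) monoid_scheme \<Rightarrow> 'a set \<Rightarrow> 'a set \<Rightarrow> bool" where
  "finitely_covered G H K \<longleftrightarrow> (\<exists>F. finite F \<and> F \<subseteq> H \<and> H \<subseteq> (\<Union>f\<in>F. K #>\<^bsub>G\<^esub> f))"

context group
begin

lemma mult_inv_cancel_left [simp]: "x \<in> carrier G \<Longrightarrow> y \<in> carrier G \<Longrightarrow> x \<otimes> (inv x \<otimes> y) = y"
  by (simp add: m_assoc[symmetric])

lemma inv_mult_cancel_left [simp]: "x \<in> carrier G \<Longrightarrow> y \<in> carrier G \<Longrightarrow> inv x \<otimes> (x \<otimes> y) = y"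
  by (simp add: m_assoc[symmetric])

lemma rcos_quotient_mem:
  assumes "subgroup K G" "g \<in> carrier G" "y \<in> K #> g" "z \<in> K #> g"
  shows "y \<otimes> inv z \<in> K"
proof -
  have zc: "z \<in> carrier G" using subgroup.elemrcos_carrier[OF assms(1) is_group assms(2,4)] .
  have "y \<in> K #> z" using repr_independence[OF assms(4,2,1)] assms(3) by simp
  then show ?thesis using subgroup.rcos_module_imp[OF assms(1) is_group zc] by blast
qed

lemma rcos_Int_self:
  assumes "subgroup L G" "g \<in> carrier G" "g \<notin> L"
  shows "(L #> g) \<inter> L = {}"
proof (rule ccontr)
  assume "(L #> g) \<inter> L \<noteq> {}"
  then obtain y where y: "y \<in> L #> g" "y \<in> L" by blast
  have "L #> g = L"
    using repr_independence[OF y(1) assms(2,1)] coset_join2[OF _ assms(1) y(2)] y(2)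
      subgroup.subset[OF assms(1)] by blast
  then show False using rcos_self[OF assms(2,1)] assms(3) by simp
qed

lemma rcos_Int_subgroup:
  assumes K: "subgroup K G" and L: "subgroup L G" and g: "g \<in> carrier G"
    and z: "z \<in> K #> g" "z \<in> L"
  shows "(K #> g) \<inter> L = (K \<inter> L) #> z"
proof -
  have KL: "subgroup (K \<inter> L) G" using subgroups_Inter_pair[OF K L] .
  have zc: "z \<in> carrier G" using z(2) subgroup.subset[OF L] by blast
  have same: "K #> g = K #> z" using repr_independence[OF z(1) g K] .
  show ?thesis
  proof (intro equalityI subsetI)
    fix y assume y: "y \<in> (K #> g) \<inter> L"
    have yc: "y \<in> carrier G" using y subgroup.subset[OF L] by blast
    have "y \<otimes> inv z \<in> K" using rcos_quotient_mem[OF K g _ z(1)] y by blast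
    moreover have "y \<otimes> inv z \<in> L"
      using y z(2) by (simp add: subgroup.m_closed[OF L] subgroup.m_inv_closed[OF L])
    ultimately show "y \<in> (K \<inter> L) #> z"
      using subgroup.rcos_module_rev[OF KL is_group zc yc] by blast
  next
    fix y assume y: "y \<in> (K \<inter> L) #> z"
    then obtain k where k: "k \<in> K" "k \<in> L" "y = k \<otimes> z" unfolding r_coset_def by blast
    have "y \<in> K #> z" using k zc subgroup.subset[OF K] by (auto intro: rcosI)
    moreover have "y \<in> L" using k z(2) subgroup.m_closed[OF L] by simp
    ultimately show "y \<in> (K #> g) \<inter> L" using same by blast
  qed
qed

lemma proper_rcos_Int_subgroup:
  assumes "subgroup K G" "subgroup L G" "g \<in> carrier G" "g \<notin> K" "z \<in> (K #> g) \<inter> L"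
  shows "(K #> g) \<inter> L = (K \<inter> L) #> z" "z \<notin> K \<inter> L"
  using rcos_Int_subgroup[OF assms(1-3)] rcos_Int_self[OF assms(1,3,4)] assms(5) by blast+

lemma finitely_covered_imp_finite_index:
  assumes "subgroup K G" "H \<subseteq> carrier G" "finitely_covered G H K"
  shows "finite_index_in K H G"
proof -
  obtain F where F: "finite F" "F \<subseteq> H" "H \<subseteq> (\<Union>f\<in>F. K #> f)"
    using assms(3) unfolding finitely_covered_def by blast
  have "{K #> a | a. a \<in> H} \<subseteq> (\<lambda>f. K #> f) ` F"
  proof clarify
    fix a assume "a \<in> H"
    then obtain f where f: "f \<in> F" "a \<in> K #> f" using F(3) by blast
    then have "K #> f = K #> a" using repr_independence assms(1,2) F(2) by blast
    then show "K #> a \<in> (\<lambda>f. K #> f) ` F" using f(1) by blast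
  qed
  then show ?thesis unfolding finite_index_in_def using F(1) finite_subset by blast
qed

lemma finitely_covered_refl:
  assumes "subgroup H G"
  shows "finitely_covered G H H"
  unfolding finitely_covered_def
proof (intro exI conjI)
  show "finite {\<one>}" "{\<one>} \<subseteq> H" using subgroup.one_closed[OF assms] by auto
  show "H \<subseteq> (\<Union>f\<in>{\<one>}. H #> f)" using coset_mult_one[OF subgroup.subset[OF assms]] by simp
qed

lemma finitely_covered_mono:
  assumes "finitely_covered G H K" "K \<subseteq> K'"
  shows "finitely_covered G H K'"
proof -
  obtain F where F: "finite F" "F \<subseteq> H" "H \<subseteq> (\<Union>f\<in>F. K #> f)"
    using assms(1) unfolding finitely_covered_def by blast
  have "\<And>f. K #> f \<subseteq> K' #> f" using assms(2) unfolding r_coset_def by blast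
  then have "H \<subseteq> (\<Union>f\<in>F. K' #> f)" using F(3) by blast
  then show ?thesis unfolding finitely_covered_def using F(1,2) by blast
qed

text \<open>Transitivity of finite index: multiply the coset representatives.\<close>

lemma finitely_covered_trans:
  assumes H: "subgroup H G" and "L \<subseteq> H" "M \<subseteq> carrier G"
    and "finitely_covered G H L" "finitely_covered G L M"
  shows "finitely_covered G H M"
proof -
  obtain F1 where F1: "finite F1" "F1 \<subseteq> H" "H \<subseteq> (\<Union>f\<in>F1. L #> f)"
    using assms(4) unfolding finitely_covered_def by blast
  obtain F2 where F2: "finite F2" "F2 \<subseteq> L" "L \<subseteq> (\<Union>f\<in>F2. M #> f)"
    using assms(5) unfolding finitely_covered_def by blast
  have HC: "H \<subseteq> carrier G" using subgroup.subset[OF H] .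
  define F where "F = (\<lambda>(b, a). b \<otimes> a) ` (F2 \<times> F1)"
  have "finite F" unfolding F_def using F1(1) F2(1) by simp
  moreover have "F \<subseteq> H"
  proof (clarsimp simp: F_def)
    fix b a assume "b \<in> F2" "a \<in> F1"
    then show "b \<otimes> a \<in> H" using F1(2) F2(2) assms(2) subgroup.m_closed[OF H] by blast
  qed
  moreover have "H \<subseteq> (\<Union>f\<in>F. M #> f)"
  proof
    fix y assume "y \<in> H"
    then obtain a l where a: "a \<in> F1" "l \<in> L" "y = l \<otimes> a"
      using F1(3) unfolding r_coset_def by blast
    then obtain b m where b: "b \<in> F2" "m \<in> M" "l = m \<otimes> b"
      using F2(3) unfolding r_coset_def by blast
    have "a \<in> carrier G" "b \<in> carrier G" "m \<in> carrier G"
      using a b F1(2) F2(2) assms(2,3) HC by auto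
    then have "y = m \<otimes> (b \<otimes> a)" using a(3) b(3) by (simp add: m_assoc)
    moreover have "b \<otimes> a \<in> F" unfolding F_def using a b by force
    ultimately show "y \<in> (\<Union>f\<in>F. M #> f)" using b(2) unfolding r_coset_def by blast
  qed
  ultimately show ?thesis unfolding finitely_covered_def by blast
qed

text \<open>If \<open>K2\<close> has finite index in \<open>H \<supseteq> K1\<close>, then \<open>K1 \<inter> K2\<close> has finite index in \<open>K1\<close>:
  each coset of \<open>K2\<close> meeting \<open>K1\<close> meets it in a coset of \<open>K1 \<inter> K2\<close>.\<close>

lemma finitely_covered_restrict:
  assumes K1: "subgroup K1 G" and K2: "subgroup K2 G" and "K1 \<subseteq> H" "H \<subseteq> carrier G"
    and "finitely_covered G H K2"
  shows "finitely_covered G K1 (K1 \<inter> K2)"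
proof -
  obtain F where F: "finite F" "F \<subseteq> H" "H \<subseteq> (\<Union>f\<in>F. K2 #> f)"
    using assms(5) unfolding finitely_covered_def by blast
  define meets where "meets = {f \<in> F. (K2 #> f) \<inter> K1 \<noteq> {}}"
  define rep where "rep = (\<lambda>f. SOME z. z \<in> (K2 #> f) \<inter> K1)"
  have rep: "rep f \<in> (K2 #> f) \<inter> K1" if m: "f \<in> meets" for f
  proof -
    obtain z where "z \<in> (K2 #> f) \<inter> K1" using m unfolding meets_def by blast
    then show ?thesis unfolding rep_def by (rule someI)
  qed
  have "K1 \<subseteq> (\<Union>z\<in>rep ` meets. (K1 \<inter> K2) #> z)"
  proof
    fix y assume y: "y \<in> K1"
    then obtain f where f: "f \<in> F" "y \<in> K2 #> f" using F(3) assms(3) by blast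
    then have m: "f \<in> meets" unfolding meets_def using y by blast
    have "f \<in> carrier G" using f(1) F(2) assms(4) by blast
    then have "(K2 #> f) \<inter> K1 = (K2 \<inter> K1) #> rep f"
      using rcos_Int_subgroup[OF K2 K1] rep[OF m] by blast
    then show "y \<in> (\<Union>z\<in>rep ` meets. (K1 \<inter> K2) #> z)"
      using m f(2) y by (auto simp: Int_commute)
  qed
  moreover have "finite (rep ` meets)" unfolding meets_def using F(1) by simp
  moreover have "rep ` meets \<subseteq> K1" using rep by blast
  ultimately show ?thesis unfolding finitely_covered_def by blast
qed

lemma finitely_covered_Int:
  assumes H: "subgroup H G" and K1: "subgroup K1 G" "K1 \<subseteq> H" and K2: "subgroup K2 G"
    and "finitely_covered G H K1" "finitely_covered G H K2"
  shows "finitely_covered G H (K1 \<inter> K2)"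
proof -
  have "finitely_covered G K1 (K1 \<inter> K2)"
    using finitely_covered_restrict[OF K1(1) K2 K1(2) subgroup.subset[OF H] assms(6)] .
  then show ?thesis
    using finitely_covered_trans[OF H K1(2) _ assms(5)] subgroup.subset[OF K2] by blast
qed

lemma finitely_covered_Inter:
  assumes H: "subgroup H G" and "finite S"
    and C: "\<And>s. s \<in> S \<Longrightarrow> subgroup (C s) G \<and> finitely_covered G H (C s)"
  shows "subgroup (H \<inter> \<Inter>(C ` S)) G \<and> finitely_covered G H (H \<inter> \<Inter>(C ` S))"
  using assms(2,3)
proof (induction S rule: finite_induct)
  case empty
  then show ?case using H finitely_covered_refl[OF H] by simp
next
  case (insert s S)
  then have IH: "subgroup (H \<inter> \<Inter>(C ` S)) G" "finitely_covered G H (H \<inter> \<Inter>(C ` S))"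
    and Cs: "subgroup (C s) G" "finitely_covered G H (C s)" by auto
  have "H \<inter> \<Inter>(C ` insert s S) = (H \<inter> \<Inter>(C ` S)) \<inter> C s" by auto
  then show ?case
    using subgroups_Inter_pair[OF IH(1) Cs(1)] finitely_covered_Int[OF H IH(1) _ Cs(1) IH(2) Cs(2)]
    by auto
qed

end


definition coset_cover :: "('a, 'b) monoid_scheme \<Rightarrow> 'a set \<Rightarrow> ('a \<times> 'a set) set \<Rightarrow> bool" where
  "coset_cover G H Fm \<longleftrightarrow> finite Fm
     \<and> (\<forall>(g, K) \<in> Fm. g \<in> H \<and> subgroup K G \<and> K \<subseteq> H)
     \<and> H \<subseteq> (\<Union>(g, K) \<in> Fm. K #>\<^bsub>G\<^esub> g)"

text \<open>The inductive step of Neumann's lemma: if \<open>L #> x\<close> avoids every coset of \<open>L\<close> in the cover,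
  then the cosets of \<open>L\<close> may be replaced by translates of the other cosets: the
  \<open>L\<close>-cosets are covered by the \<open>K #> g \<otimes> inv x \<otimes> j\<close> with \<open>K \<noteq> L\<close>.\<close>

definition eliminate_cosets :: "('a, 'b) monoid_scheme \<Rightarrow> ('a \<times> 'a set) set \<Rightarrow> 'a set \<Rightarrow> 'a
    \<Rightarrow> ('a \<times> 'a set) set" where
  "eliminate_cosets G Fm L x = {p \<in> Fm. snd p \<noteq> L}
     \<union> {(g \<otimes>\<^bsub>G\<^esub> inv\<^bsub>G\<^esub> x \<otimes>\<^bsub>G\<^esub> j, K) | g K j. (g, K) \<in> Fm \<and> K \<noteq> L \<and> (j, L) \<in> Fm}"

lemma eliminate_cosets_subgroups: "snd ` eliminate_cosets G Fm L x \<subseteq> snd ` Fm - {L}"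
  unfolding eliminate_cosets_def by force

definition proper_coset_cover :: "('a, 'b) monoid_scheme \<Rightarrow> 'a set \<Rightarrow> 'a set \<Rightarrow> ('a \<times> 'a set) set
    \<Rightarrow> bool" where
  "proper_coset_cover G H K Fm \<longleftrightarrow> finite Fm
     \<and> (\<forall>(g, L) \<in> Fm. g \<in> H \<and> subgroup L G \<and> L \<subseteq> H \<and> g \<notin> L)
     \<and> H \<subseteq> K \<union> (\<Union>(g, L) \<in> Fm. L #>\<^bsub>G\<^esub> g)"

definition restrict_cover :: "('a, 'b) monoid_scheme \<Rightarrow> ('a \<times> 'a set) set \<Rightarrow> 'a set
    \<Rightarrow> ('a \<times> 'a set) set" where
  "restrict_cover G Fm L = (\<lambda>(g, M). (SOME z. z \<in> (M #>\<^bsub>G\<^esub> g) \<inter> L, M \<inter> L))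
     ` {(g, M) \<in> Fm. (M #>\<^bsub>G\<^esub> g) \<inter> L \<noteq> {}}"

context group
begin

lemma rcos_left_mult_cancel:
  assumes L: "subgroup L G" and "l \<in> L" "x \<in> carrier G" "g \<in> carrier G" "l \<otimes> x \<in> L #> g"
  shows "x \<in> L #> g"
proof -
  obtain k where k: "k \<in> L" "l \<otimes> x = k \<otimes> g" using assms(5) unfolding r_coset_def by blast
  have c: "l \<in> carrier G" "k \<in> carrier G" using assms(2) k(1) subgroup.subset[OF L] by blast+
  have "x = inv l \<otimes> (l \<otimes> x)" using c assms(3) by simp
  also have "\<dots> = (inv l \<otimes> k) \<otimes> g" using c assms(4) k(2) by (simp add: m_assoc)
  finally show ?thesis
    using rcosI[OF _ subgroup.subset[OF L] assms(4)] assms(2) k(1)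
    by (simp add: subgroup.m_closed[OF L] subgroup.m_inv_closed[OF L])
qed

lemma eliminate_cosets_covers_eliminated:
  assumes H: "subgroup H G" and cov: "coset_cover G H Fm"
    and x: "x \<in> H" "\<And>j. (j, L) \<in> Fm \<Longrightarrow> x \<notin> L #> j"
    and y: "(j, L) \<in> Fm" "y \<in> L #> j"
  shows "y \<in> (\<Union>(g, K) \<in> eliminate_cosets G Fm L x. K #> g)"
proof -
  have HC: "H \<subseteq> carrier G" using subgroup.subset[OF H] .
  have mem: "\<And>g K. (g, K) \<in> Fm \<Longrightarrow> g \<in> H \<and> subgroup K G \<and> K \<subseteq> H"
    and covers: "H \<subseteq> (\<Union>(g, K) \<in> Fm. K #> g)"
    using cov unfolding coset_cover_def by auto
  have sL: "subgroup L G" "L \<subseteq> H" using mem[OF y(1)] by auto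
  obtain l where l: "l \<in> L" "y = l \<otimes> j" using y(2) unfolding r_coset_def by blast
  have c: "l \<in> carrier G" "j \<in> carrier G" "x \<in> carrier G" using l(1) sL(2) mem[OF y(1)] x(1) HC by blast+
  have "l \<otimes> x \<in> H" using l(1) sL(2) x(1) subgroup.m_closed[OF H] by blast
  then obtain g K where gK: "(g, K) \<in> Fm" "l \<otimes> x \<in> K #> g" using covers by blast
  then obtain k where k: "k \<in> K" "l \<otimes> x = k \<otimes> g" unfolding r_coset_def by blast
  have c': "g \<in> carrier G" "k \<in> carrier G" using gK(1) k(1) mem HC by blast+
  have "K \<noteq> L" using rcos_left_mult_cancel[OF sL(1) l(1) c(3) c'(1)] gK x(2) by blast
  then have "(g \<otimes> inv x \<otimes> j, K) \<in> eliminate_cosets G Fm L x"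
    using gK(1) y(1) unfolding eliminate_cosets_def by blast
  moreover have "y = k \<otimes> (g \<otimes> inv x \<otimes> j)"
  proof -
    have "k \<otimes> (g \<otimes> inv x \<otimes> j) = (k \<otimes> g) \<otimes> inv x \<otimes> j" using c c' by (simp add: m_assoc)
    also have "\<dots> = l \<otimes> j" by (simp only: k(2)[symmetric]) (simp add: m_assoc c)
    finally show ?thesis using l(2) by simp
  qed
  moreover have "k \<otimes> (g \<otimes> inv x \<otimes> j) \<in> K #> (g \<otimes> inv x \<otimes> j)"
    using k(1) c c' gK(1) mem HC by (intro rcosI) (auto dest: subgroup.subset)
  ultimately show ?thesis by auto
qed

lemma eliminate_cosets_cover:
  assumes H: "subgroup H G" and cov: "coset_cover G H Fm"
    and x: "x \<in> H" "\<And>j. (j, L) \<in> Fm \<Longrightarrow> x \<notin> L #> j"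
  shows "coset_cover G H (eliminate_cosets G Fm L x)"
proof -
  have fin: "finite Fm" and mem: "\<And>g K. (g, K) \<in> Fm \<Longrightarrow> g \<in> H \<and> subgroup K G \<and> K \<subseteq> H"
    and covers: "H \<subseteq> (\<Union>(g, K) \<in> Fm. K #> g)"
    using cov unfolding coset_cover_def by auto
  have "eliminate_cosets G Fm L x \<subseteq> Fm \<union> (\<lambda>((g, K), (j, _)). (g \<otimes> inv x \<otimes> j, K)) ` (Fm \<times> Fm)"
    unfolding eliminate_cosets_def by force
  then have "finite (eliminate_cosets G Fm L x)"
    by (rule finite_subset) (simp add: fin)
  moreover have "g \<in> H \<and> subgroup K G \<and> K \<subseteq> H" if gK: "(g, K) \<in> eliminate_cosets G Fm L x" for g K
  proof -
    have closed: "g' \<otimes> inv x \<otimes> j \<in> H" if "g' \<in> H" "j \<in> H" for g' j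
      using that x(1) by (simp add: subgroup.m_closed[OF H] subgroup.m_inv_closed[OF H])
    show ?thesis using gK mem closed unfolding eliminate_cosets_def by blast
  qed
  moreover have "H \<subseteq> (\<Union>(g, K) \<in> eliminate_cosets G Fm L x. K #> g)"
  proof
    fix y assume "y \<in> H"
    then obtain g K where gK: "(g, K) \<in> Fm" "y \<in> K #> g" using covers by blast
    show "y \<in> (\<Union>(g, K) \<in> eliminate_cosets G Fm L x. K #> g)"
    proof (cases "K = L")
      case False
      then have "(g, K) \<in> eliminate_cosets G Fm L x" using gK(1) unfolding eliminate_cosets_def by simp
      then show ?thesis using gK(2) by blast
    next
      case True
      then show ?thesis using eliminate_cosets_covers_eliminated[OF H cov x] gK by blast
    qed
  qed
  ultimately show ?thesis unfolding coset_cover_def by blast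
qed

text \<open>Induction on the number of distinct subgroups: if the
  subgroup \<open>L\<close> has infinite index some coset \<open>L #> x\<close> is not in the cover, and the cosets of
  \<open>L\<close> can be eliminated.\<close>

theorem neumann_lemma:
  assumes H: "subgroup H G" and "coset_cover G H Fm"
  shows "\<exists>g K. (g, K) \<in> Fm \<and> finitely_covered G H K"
  using assms(2)
proof (induction "card (snd ` Fm)" arbitrary: Fm rule: less_induct)
  case less
  have fin: "finite Fm" and mem: "\<And>g K. (g, K) \<in> Fm \<Longrightarrow> g \<in> H"
    and covers: "H \<subseteq> (\<Union>(g, K) \<in> Fm. K #> g)"
    using less.prems unfolding coset_cover_def by auto
  obtain g0 L where g0L: "(g0, L) \<in> Fm" using covers subgroup.one_closed[OF H] by blast
  show ?case
  proof (cases "finitely_covered G H L")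
    case True
    then show ?thesis using g0L by blast
  next
    case False
    define J where "J = {j. (j, L) \<in> Fm}"
    have "J \<subseteq> fst ` Fm" unfolding J_def by force
    then have "finite J" using fin finite_subset by blast
    moreover have "J \<subseteq> H" unfolding J_def using mem by blast
    ultimately have "\<not> H \<subseteq> (\<Union>j\<in>J. L #> j)"
      using False unfolding finitely_covered_def by blast
    then obtain x where x: "x \<in> H" "\<And>j. (j, L) \<in> Fm \<Longrightarrow> x \<notin> L #> j"
      unfolding J_def by blast
    define Fm' where "Fm' = eliminate_cosets G Fm L x"
    have cover': "coset_cover G H Fm'"
      unfolding Fm'_def using eliminate_cosets_cover[OF H less.prems x] .
    have fewer: "snd ` Fm' \<subseteq> snd ` Fm - {L}"
      unfolding Fm'_def using eliminate_cosets_subgroups .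
    have "L \<in> snd ` Fm" using g0L by force
    have "card (snd ` Fm') \<le> card (snd ` Fm - {L})" using fin fewer by (simp add: card_mono)
    also have "\<dots> < card (snd ` Fm)" by (rule card_Diff1_less[OF finite_imageI[OF fin] \<open>L \<in> snd ` Fm\<close>])
    finally have "card (snd ` Fm') < card (snd ` Fm)" .
    then obtain g K where "(g, K) \<in> Fm'" "finitely_covered G H K"
      using less.hyps cover' by blast
    moreover have "K \<in> snd ` Fm" using fewer \<open>(g, K) \<in> Fm'\<close> by force
    then obtain g' where "(g', K) \<in> Fm" by force
    ultimately show ?thesis by blast
  qed
qed

lemma restrict_cover_card:
  assumes H: "subgroup H G" and cov: "proper_coset_cover G H K Fm" and g0L: "(g0, L) \<in> Fm"
  shows "card (restrict_cover G Fm L) < card Fm"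
proof -
  define meets where "meets = {(g, M) \<in> Fm. (M #> g) \<inter> L \<noteq> {}}"
  have fin: "finite Fm" and g0: "g0 \<in> H" "subgroup L G" "g0 \<notin> L"
    using cov g0L unfolding proper_coset_cover_def by auto
  have "(g0, L) \<notin> meets"
    using rcos_Int_self[OF g0(2) _ g0(3)] g0(1) subgroup.subset[OF H] unfolding meets_def by blast
  then have "meets \<subset> Fm" using g0L unfolding meets_def by blast
  then have "card meets < card Fm" using fin by (simp add: psubset_card_mono)
  moreover have "finite meets" using \<open>meets \<subset> Fm\<close> fin finite_subset by blast
  then have "card (restrict_cover G Fm L) \<le> card meets"
    unfolding restrict_cover_def meets_def[symmetric] by (rule card_image_le)
  ultimately show ?thesis by simp
qed

lemma restrict_cover_proper:
  assumes H: "subgroup H G" and cov: "proper_coset_cover G H K Fm" and g0L: "(g0, L) \<in> Fm"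
  shows "proper_coset_cover G L (K \<inter> L) (restrict_cover G Fm L)"
proof -
  have fin: "finite Fm"
    and mem: "\<And>g M. (g, M) \<in> Fm \<Longrightarrow> g \<in> carrier G \<and> subgroup M G \<and> g \<notin> M"
    and covers: "H \<subseteq> K \<union> (\<Union>(g, M) \<in> Fm. M #> g)"
    using cov subgroup.subset[OF H] unfolding proper_coset_cover_def by auto
  have sL: "subgroup L G" and LH: "L \<subseteq> H" using cov g0L unfolding proper_coset_cover_def by auto
  define rep where "rep = (\<lambda>g M. SOME z. z \<in> (M #> g) \<inter> L)"
  have trace: "rep g M \<in> (M #> g) \<inter> L \<and> (M #> g) \<inter> L = (M \<inter> L) #> rep g M
      \<and> rep g M \<notin> M \<inter> L \<and> subgroup (M \<inter> L) G"
    if gM: "(g, M) \<in> Fm" and meets: "(M #> g) \<inter> L \<noteq> {}" for g M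
  proof -
    obtain z where "z \<in> (M #> g) \<inter> L" using meets by blast
    then have "rep g M \<in> (M #> g) \<inter> L" unfolding rep_def by (rule someI)
    then show ?thesis using proper_rcos_Int_subgroup[OF _ sL] mem[OF gM]
        subgroups_Inter_pair[OF _ sL] by blast
  qed
  have R: "restrict_cover G Fm L = (\<lambda>(g, M). (rep g M, M \<inter> L)) ` {(g, M) \<in> Fm. (M #> g) \<inter> L \<noteq> {}}"
    unfolding restrict_cover_def rep_def by simp
  show ?thesis
    unfolding proper_coset_cover_def
  proof (intro conjI)
    have "{(g, M) \<in> Fm. (M #> g) \<inter> L \<noteq> {}} \<subseteq> Fm" by blast
    then show "finite (restrict_cover G Fm L)"
      unfolding restrict_cover_def using fin finite_subset finite_imageI by blast
    show "\<forall>(z, N) \<in> restrict_cover G Fm L. z \<in> L \<and> subgroup N G \<and> N \<subseteq> L \<and> z \<notin> N"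
      unfolding R using trace by auto
    show "L \<subseteq> K \<inter> L \<union> (\<Union>(z, N) \<in> restrict_cover G Fm L. N #> z)"
    proof
      fix y assume y: "y \<in> L"
      show "y \<in> K \<inter> L \<union> (\<Union>(z, N) \<in> restrict_cover G Fm L. N #> z)"
      proof (cases "y \<in> K")
        case False
        then obtain g M where gM: "(g, M) \<in> Fm" "y \<in> M #> g" using y LH covers by blast
        then have "(M #> g) \<inter> L \<noteq> {}" using y by blast
        then have "(rep g M, M \<inter> L) \<in> restrict_cover G Fm L" "y \<in> (M \<inter> L) #> rep g M"
          using gM trace[OF gM(1)] y unfolding R by force+
        then show ?thesis by blast
      qed (use y in blast)
    qed
  qed
qed

text \<open>By Neumann's lemma some subgroup \<open>L\<close> of the
  cover has finite index; if \<open>L \<noteq> K\<close> restrict the cover to \<open>L\<close>, where the cosets of \<open>L\<close> drop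
  out, and conclude by induction and transitivity.\<close>

theorem strong_neumann_lemma:
  assumes "subgroup H G" "subgroup K G" "K \<subseteq> H" "proper_coset_cover G H K Fm"
  shows "finitely_covered G H K"
  using assms
proof (induction "card Fm" arbitrary: H K Fm rule: less_induct)
  case less
  have KC: "K \<subseteq> carrier G" using subgroup.subset[OF less.prems(2)] .
  have "coset_cover G H (insert (\<one>, K) Fm)"
    using less.prems subgroup.one_closed[OF less.prems(1)] coset_mult_one[OF KC]
    unfolding proper_coset_cover_def coset_cover_def by auto
  then obtain g L where gL: "(g, L) \<in> insert (\<one>, K) Fm" "finitely_covered G H L"
    using neumann_lemma[OF less.prems(1)] by blast
  show ?case
  proof (cases "L = K")
    case True
    then show ?thesis using gL(2) by simp
  next
    case False
    then have gLF: "(g, L) \<in> Fm" using gL(1) by blast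
    then have sL: "subgroup L G" and LH: "L \<subseteq> H"
      using less.prems(4) unfolding proper_coset_cover_def by auto
    have "finitely_covered G L (K \<inter> L)"
      using less.hyps[OF restrict_cover_card[OF less.prems(1,4) gLF] sL]
        subgroups_Inter_pair[OF less.prems(2) sL] restrict_cover_proper[OF less.prems(1,4) gLF]
      by blast
    then have "finitely_covered G H (K \<inter> L)"
      using finitely_covered_trans[OF less.prems(1) LH _ gL(2)] KC by blast
    then show ?thesis using finitely_covered_mono by blast
  qed
qed

end


definition centralizer_in :: "('a, 'b) monoid_scheme \<Rightarrow> 'a set \<Rightarrow> 'a \<Rightarrow> 'a set" where
  "centralizer_in G A w = {a \<in> A. w \<otimes>\<^bsub>G\<^esub> a = a \<otimes>\<^bsub>G\<^esub> w}"

context group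
begin

lemma subgroup_centralizer_in:
  assumes A: "subgroup A G" and w: "w \<in> carrier G"
  shows "subgroup (centralizer_in G A w) G"
proof (rule subgroupI)
  have AC: "A \<subseteq> carrier G" using subgroup.subset[OF A] .
  show "centralizer_in G A w \<subseteq> carrier G" unfolding centralizer_in_def using AC by blast
  show "centralizer_in G A w \<noteq> {}"
    unfolding centralizer_in_def using subgroup.one_closed[OF A] w by auto
next
  fix a assume a: "a \<in> centralizer_in G A w"
  have ac: "a \<in> carrier G" using a subgroup.subset[OF A] unfolding centralizer_in_def by blast
  have "inv a \<otimes> (w \<otimes> a) \<otimes> inv a = inv a \<otimes> (a \<otimes> w) \<otimes> inv a"
    using a unfolding centralizer_in_def by simp
  then have "w \<otimes> inv a = inv a \<otimes> w" using ac w by (simp add: m_assoc)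
  then show "inv a \<in> centralizer_in G A w"
    using a subgroup.m_inv_closed[OF A] unfolding centralizer_in_def by blast
next
  fix a b assume a: "a \<in> centralizer_in G A w" and b: "b \<in> centralizer_in G A w"
  have c: "a \<in> carrier G" "b \<in> carrier G"
    using a b subgroup.subset[OF A] unfolding centralizer_in_def by auto
  have "w \<otimes> (a \<otimes> b) = a \<otimes> (w \<otimes> b)"
    using a c w unfolding centralizer_in_def by (simp add: m_assoc[symmetric])
  also have "\<dots> = a \<otimes> b \<otimes> w" using b c w unfolding centralizer_in_def by (simp add: m_assoc)
  finally show "a \<otimes> b \<in> centralizer_in G A w"
    using a b subgroup.m_closed[OF A] unfolding centralizer_in_def by blast
qed

lemma commute_inv_imp_commute:
  assumes "x \<in> carrier G" "y \<in> carrier G" "inv x \<otimes> y = y \<otimes> inv x"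
  shows "x \<otimes> y = y \<otimes> x"
proof -
  have "y \<otimes> x = x \<otimes> (inv x \<otimes> y) \<otimes> x" using assms(1,2) by (simp add: m_assoc)
  also have "\<dots> = x \<otimes> (y \<otimes> inv x) \<otimes> x" by (simp only: assms(3))
  also have "\<dots> = x \<otimes> y" using assms(1,2) by (simp add: m_assoc)
  finally show ?thesis by simp
qed

lemma generate_commutes:
  assumes "Y \<subseteq> carrier G" "w \<in> carrier G" "\<And>y. y \<in> Y \<Longrightarrow> w \<otimes> y = y \<otimes> w"
  shows "generate G Y \<subseteq> centralizer_in G (carrier G) w"
proof (rule generate_subgroup_incl)
  show "Y \<subseteq> centralizer_in G (carrier G) w" using assms unfolding centralizer_in_def by blast
  show "subgroup (centralizer_in G (carrier G) w) G"
    using subgroup_centralizer_in[OF subgroup_self assms(2)] .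
qed

lemma generate_abelian:
  assumes Y: "Y \<subseteq> carrier G" and comm: "\<And>x y. x \<in> Y \<Longrightarrow> y \<in> Y \<Longrightarrow> x \<otimes> y = y \<otimes> x"
  shows "abelian_subgroup (generate G Y) G"
  unfolding abelian_subgroup_def
proof (intro conjI ballI)
  show "subgroup (generate G Y) G" using generate_is_subgroup[OF Y] .
  have gen_Y: "w \<otimes> z = z \<otimes> w" if "w \<in> Y" "z \<in> generate G Y" for w z
    using generate_commutes[OF Y _ comm[OF that(1)]] that Y unfolding centralizer_in_def by blast
  fix y z assume y: "y \<in> generate G Y" and z: "z \<in> generate G Y"
  have "Y \<subseteq> centralizer_in G (carrier G) z"
    using gen_Y[OF _ z] Y unfolding centralizer_in_def by auto
  then have "generate G Y \<subseteq> centralizer_in G (carrier G) z"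
    using generate_subgroup_incl subgroup_centralizer_in[OF subgroup_self] generate_in_carrier[OF Y z]
    by blast
  then show "y \<otimes> z = z \<otimes> y" using y unfolding centralizer_in_def by auto
qed

lemma abelian_join:
  assumes A: "abelian_subgroup A G" and B: "abelian_subgroup (generate G S) G" and S: "S \<subseteq> carrier G"
    and comm: "\<And>a s. a \<in> A \<Longrightarrow> s \<in> S \<Longrightarrow> a \<otimes> s = s \<otimes> a"
  shows "abelian_subgroup (generate G (A \<union> generate G S)) G"
proof (rule generate_abelian)
  have AC: "A \<subseteq> carrier G" using A subgroup.subset unfolding abelian_subgroup_def by blast
  then show "A \<union> generate G S \<subseteq> carrier G" using generate_in_carrier[OF S] by blast
  have AB: "a \<otimes> b = b \<otimes> a" if "a \<in> A" "b \<in> generate G S" for a b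
    using generate_commutes[OF S _ comm[OF that(1)]] that AC unfolding centralizer_in_def by blast
  fix x y assume "x \<in> A \<union> generate G S" "y \<in> A \<union> generate G S"
  then show "x \<otimes> y = y \<otimes> x"
  proof (elim UnE)
    assume "x \<in> A" "y \<in> A" then show ?thesis using A unfolding abelian_subgroup_def by blast
  next
    assume "x \<in> A" "y \<in> generate G S" then show ?thesis using AB by blast
  next
    assume "x \<in> generate G S" "y \<in> A" then show ?thesis using AB by metis
  next
    assume "x \<in> generate G S" "y \<in> generate G S"
    then show ?thesis using B unfolding abelian_subgroup_def by blast
  qed
qed

lemma twisted_commuting_coset:
  assumes A: "subgroup A G" and w: "w \<in> carrier G" "w' \<in> carrier G"
    and a0: "a0 \<in> A" "w \<otimes> a0 = a0 \<otimes> w'" and a: "a \<in> A" "w \<otimes> a = a \<otimes> w'"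
  shows "a \<in> centralizer_in G A w #> a0"
proof -
  have c: "a0 \<in> carrier G" "a \<in> carrier G" using a0(1) a(1) subgroup.subset[OF A] by auto
  have swap: "w' \<otimes> inv a0 = inv a0 \<otimes> w"
  proof -
    have "inv a0 \<otimes> w = inv a0 \<otimes> (w \<otimes> a0) \<otimes> inv a0" using c w by (simp add: m_assoc)
    also have "\<dots> = w' \<otimes> inv a0" using a0(2) c w by (simp add: m_assoc)
    finally show ?thesis by simp
  qed
  have "w \<otimes> (a \<otimes> inv a0) = a \<otimes> (w' \<otimes> inv a0)" using a(2) c w by (simp add: m_assoc[symmetric])
  also have "\<dots> = (a \<otimes> inv a0) \<otimes> w" using swap c w by (simp add: m_assoc)
  finally have "a \<otimes> inv a0 \<in> centralizer_in G A w"
    using a(1) a0(1) subgroup.m_closed[OF A] subgroup.m_inv_closed[OF A]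
    unfolding centralizer_in_def by blast
  moreover have "a = (a \<otimes> inv a0) \<otimes> a0" using c by (simp add: m_assoc)
  ultimately show ?thesis unfolding r_coset_def by blast
qed

end


locale uniquely_2_divisible_involution = group +
  fixes nu :: "'a \<Rightarrow> 'a"
  assumes nu_hom: "nu \<in> hom G G"
    and nu_nu: "\<And>x. x \<in> carrier G \<Longrightarrow> nu (nu x) = x"
    and unique_sqrt: "uniquely_2_divisible G"
begin

lemma nu_group_hom: "group_hom G G nu"
  by (simp add: group_hom_def group_hom_axioms_def nu_hom is_group)

lemma nu_closed [simp]: "x \<in> carrier G \<Longrightarrow> nu x \<in> carrier G"
  using group_hom.hom_closed[OF nu_group_hom] by blast

lemma nu_mult [simp]: "x \<in> carrier G \<Longrightarrow> y \<in> carrier G \<Longrightarrow> nu (x \<otimes> y) = nu x \<otimes> nu y"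
  using group_hom.hom_mult[OF nu_group_hom] by blast

lemma nu_inv [simp]: "x \<in> carrier G \<Longrightarrow> nu (inv x) = inv (nu x)"
  using group_hom.hom_inv[OF nu_group_hom] by blast

lemma nu_one [simp]: "nu \<one> = \<one>"
  using group_hom.hom_one[OF nu_group_hom] by blast

lemma square_inj: "x \<in> carrier G \<Longrightarrow> y \<in> carrier G \<Longrightarrow> x \<otimes> x = y \<otimes> y \<Longrightarrow> x = y"
  using unique_sqrt m_closed unfolding uniquely_2_divisible_def by metis

text \<open>Every \<open>u\<close> is a product \<open>x \<otimes> c\<close> of an element inverted by \<open>nu\<close> and a fixed point:
  take for \<open>x\<close> the square root of \<open>u \<otimes> inv (nu u)\<close>.\<close>

lemma inverted_fixed_decomposition:
  assumes u: "u \<in> carrier G"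
  obtains x c where "x \<in> carrier G" "nu x = inv x" "c \<in> carrier G" "nu c = c" "u = x \<otimes> c"
proof -
  define p where "p = u \<otimes> inv (nu u)"
  have pc: "p \<in> carrier G" unfolding p_def using u by simp
  obtain x where x: "x \<in> carrier G" "x \<otimes> x = p"
    using unique_sqrt pc unfolding uniquely_2_divisible_def by blast
  have "inv (nu x) \<otimes> inv (nu x) = inv (nu (x \<otimes> x))"
    using x(1) by (simp add: inv_mult_group)
  also have "\<dots> = p" using u unfolding x(2) p_def by (simp add: nu_nu inv_mult_group)
  finally have "inv (nu x) = x" using square_inj x by simp
  then have nx: "nu x = inv x" using x(1) by (metis inv_inv nu_closed)
  define c where "c = inv x \<otimes> u"
  have "nu c = x \<otimes> nu u" unfolding c_def using x(1) u nx by simp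
  also have "\<dots> = inv x \<otimes> (x \<otimes> x) \<otimes> nu u" using x(1) u by (simp add: m_assoc)
  also have "\<dots> = c" using x u unfolding p_def c_def by (simp add: m_assoc)
  finally have "nu c = c" .
  moreover have "u = x \<otimes> c" unfolding c_def using x u by simp
  moreover have "c \<in> carrier G" unfolding c_def using x u by simp
  ultimately show ?thesis using that x(1) nx by blast
qed

text \<open>The decomposition is unique: \<open>x \<otimes> x = (x \<otimes> c) \<otimes> inv (nu (x \<otimes> c))\<close>.\<close>

lemma fixed_part_unique:
  assumes "x \<in> carrier G" "x' \<in> carrier G" "c \<in> carrier G" "c' \<in> carrier G"
    "nu x = inv x" "nu x' = inv x'" "nu c = c" "nu c' = c'" "x \<otimes> c = x' \<otimes> c'"
  shows "c = c'"
proof -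
  have "nu (x \<otimes> c) = nu (x' \<otimes> c')" by (simp only: assms(9))
  then have nu_eq: "inv x \<otimes> c = inv x' \<otimes> c'" using assms(1-8) by simp
  have "x \<otimes> x = (x \<otimes> c) \<otimes> inv (inv x \<otimes> c)" using assms(1,3) by (simp add: inv_mult_group m_assoc)
  also have "\<dots> = (x' \<otimes> c') \<otimes> inv (inv x' \<otimes> c')" by (simp only: assms(9) nu_eq)
  also have "\<dots> = x' \<otimes> x'" using assms(2,4) by (simp add: inv_mult_group m_assoc)
  finally have "x = x'" using square_inj assms(1,2) by blast
  then show ?thesis using assms(1-4,9) by simp
qed

lemma twisted_commutation:
  assumes a: "a \<in> carrier G" "nu a = inv a" and b: "b \<in> carrier G" "nu b = inv b"
  obtains c where "c \<in> carrier G" "nu c = c" "inv b \<otimes> inv c \<otimes> a = a \<otimes> (c \<otimes> inv b)"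
proof -
  obtain x c where xc: "x \<in> carrier G" "nu x = inv x" "c \<in> carrier G" "nu c = c" "a \<otimes> b = x \<otimes> c"
    using inverted_fixed_decomposition[of "a \<otimes> b"] a b by auto
  have x_eq: "x = a \<otimes> b \<otimes> inv c" using xc a b by (simp add: m_assoc)
  have "nu x = inv a \<otimes> (inv b \<otimes> inv c)" unfolding x_eq using a b xc(3,4) by (simp add: m_assoc)
  moreover have "inv x = c \<otimes> (inv b \<otimes> inv a)"
    unfolding x_eq using a b xc(3) by (simp add: inv_mult_group m_assoc)
  ultimately have E: "inv a \<otimes> (inv b \<otimes> inv c) = c \<otimes> (inv b \<otimes> inv a)" using xc(2) by simp
  have "inv b \<otimes> inv c \<otimes> a = a \<otimes> (inv a \<otimes> (inv b \<otimes> inv c)) \<otimes> a"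
    using a b xc by (simp add: m_assoc)
  also have "\<dots> = a \<otimes> (c \<otimes> (inv b \<otimes> inv a)) \<otimes> a" by (simp only: E)
  also have "\<dots> = a \<otimes> (c \<otimes> inv b)" using a b xc by (simp add: m_assoc)
  finally show ?thesis using that xc(3,4) by blast
qed

text \<open>The twist is trivial only for \<open>c = \<one>\<close>: then \<open>b = (b \<otimes> inv c) \<otimes> c\<close> is a second
  decomposition of \<open>b = b \<otimes> \<one>\<close>.\<close>

lemma trivial_twist:
  assumes c: "c \<in> carrier G" "nu c = c" and b: "b \<in> carrier G" "nu b = inv b"
    and eq: "inv b \<otimes> inv c = c \<otimes> inv b"
  shows "c = \<one>"
proof -
  define y where "y = b \<otimes> inv c"
  have yc: "y \<in> carrier G" unfolding y_def using b c by simp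
  have "nu y = inv b \<otimes> inv c" unfolding y_def using b c by simp
  also have "\<dots> = inv y" unfolding y_def using b c eq by (simp add: inv_mult_group)
  finally have "nu y = inv y" .
  moreover have "y \<otimes> c = b \<otimes> \<one>" unfolding y_def using b c by (simp add: m_assoc)
  ultimately show "c = \<one>" using fixed_part_unique[OF yc b(1) c(1) one_closed] b(2) c(2) by simp
qed

end


definition twisted_class :: "('a, 'b) monoid_scheme \<Rightarrow> 'a set \<Rightarrow> 'a \<Rightarrow> 'a \<Rightarrow> 'a set" where
  "twisted_class G A b c = {a \<in> A. (inv\<^bsub>G\<^esub> b \<otimes>\<^bsub>G\<^esub> inv\<^bsub>G\<^esub> c) \<otimes>\<^bsub>G\<^esub> a = a \<otimes>\<^bsub>G\<^esub> (c \<otimes>\<^bsub>G\<^esub> inv\<^bsub>G\<^esub> b)}"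

context uniquely_2_divisible_involution
begin

lemma twisted_class_cover:
  assumes AC: "A \<subseteq> carrier G" and inv_A: "\<And>a. a \<in> A \<Longrightarrow> nu a = inv a"
    and b: "b \<in> carrier G" "nu b = inv b"
  shows "A \<subseteq> centralizer_in G A b
    \<union> (\<Union>c \<in> {c \<in> carrier G. nu c = c \<and> c \<noteq> \<one>}. twisted_class G A b c)"
proof
  fix a assume a: "a \<in> A"
  obtain c where c: "c \<in> carrier G" "nu c = c" "inv b \<otimes> inv c \<otimes> a = a \<otimes> (c \<otimes> inv b)"
    using twisted_commutation[of a b] a AC inv_A b by blast
  show "a \<in> centralizer_in G A b \<union> (\<Union>c \<in> {c \<in> carrier G. nu c = c \<and> c \<noteq> \<one>}. twisted_class G A b c)"
  proof (cases "c = \<one>")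
    case True
    then have "inv b \<otimes> a = a \<otimes> inv b" using c(3) b(1) a AC by auto
    then have "a \<in> centralizer_in G A b"
      using commute_inv_imp_commute b(1) a AC unfolding centralizer_in_def by blast
    then show ?thesis by blast
  next
    case False
    then show ?thesis using a c unfolding twisted_class_def by blast
  qed
qed

lemma twisted_class_proper_coset:
  assumes A: "subgroup A G" and c: "c \<in> carrier G" "nu c = c" "c \<noteq> \<one>"
    and b: "b \<in> carrier G" "nu b = inv b" and a0: "a0 \<in> twisted_class G A b c"
  shows "twisted_class G A b c \<subseteq> centralizer_in G A (inv b \<otimes> inv c) #> a0"
    and "a0 \<notin> centralizer_in G A (inv b \<otimes> inv c)"
proof -
  have w: "inv b \<otimes> inv c \<in> carrier G" "c \<otimes> inv b \<in> carrier G" using b c by auto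
  have a0': "a0 \<in> A" "inv b \<otimes> inv c \<otimes> a0 = a0 \<otimes> (c \<otimes> inv b)"
    using a0 unfolding twisted_class_def by auto
  show "twisted_class G A b c \<subseteq> centralizer_in G A (inv b \<otimes> inv c) #> a0"
    using twisted_commuting_coset[OF A w a0'] unfolding twisted_class_def by blast
  show "a0 \<notin> centralizer_in G A (inv b \<otimes> inv c)"
  proof
    assume "a0 \<in> centralizer_in G A (inv b \<otimes> inv c)"
    then have "a0 \<otimes> (inv b \<otimes> inv c) = a0 \<otimes> (c \<otimes> inv b)"
      using a0'(2) unfolding centralizer_in_def by simp
    moreover have "a0 \<in> carrier G" using a0'(1) subgroup.subset[OF A] by blast
    ultimately have "inv b \<otimes> inv c = c \<otimes> inv b" using w by simp
    then show False using trivial_twist[OF c(1,2) b] c(3) by blast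
  qed
qed

theorem centralizer_finitely_covered:
  assumes A: "subgroup A G" and inv_A: "\<And>a. a \<in> A \<Longrightarrow> nu a = inv a"
    and b: "b \<in> carrier G" "nu b = inv b" and fin: "finite {c \<in> carrier G. nu c = c}"
  shows "finitely_covered G A (centralizer_in G A b)"
proof -
  have AC: "A \<subseteq> carrier G" using subgroup.subset[OF A] .
  define Cs where "Cs = {c \<in> carrier G. nu c = c \<and> c \<noteq> \<one> \<and> twisted_class G A b c \<noteq> {}}"
  define rep where "rep = (\<lambda>c. SOME a. a \<in> twisted_class G A b c)"
  define Fm where "Fm = (\<lambda>c. (rep c, centralizer_in G A (inv b \<otimes> inv c))) ` Cs"
  have rep: "c \<in> carrier G" "nu c = c" "c \<noteq> \<one>" "rep c \<in> twisted_class G A b c" if "c \<in> Cs" for c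
    using that unfolding rep_def Cs_def by (auto simp: some_in_eq)
  have "proper_coset_cover G A (centralizer_in G A b) Fm"
    unfolding proper_coset_cover_def
  proof (intro conjI)
    have "Cs \<subseteq> {c \<in> carrier G. nu c = c}" unfolding Cs_def by blast
    then show "finite Fm" unfolding Fm_def using fin finite_subset by blast
    have "rep c \<in> A \<and> subgroup (centralizer_in G A (inv b \<otimes> inv c)) G
        \<and> centralizer_in G A (inv b \<otimes> inv c) \<subseteq> A \<and> rep c \<notin> centralizer_in G A (inv b \<otimes> inv c)"
      if "c \<in> Cs" for c
      using rep[OF that] twisted_class_proper_coset(2)[OF A _ _ _ b] subgroup_centralizer_in[OF A] b(1)
      unfolding twisted_class_def centralizer_in_def by auto
    then show "\<forall>(g, L) \<in> Fm. g \<in> A \<and> subgroup L G \<and> L \<subseteq> A \<and> g \<notin> L"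
      unfolding Fm_def by auto
    have "twisted_class G A b c \<subseteq> (\<Union>(g, L) \<in> Fm. L #> g)"
      if "c \<in> carrier G" "nu c = c" "c \<noteq> \<one>" for c
    proof (cases "c \<in> Cs")
      case True
      then show ?thesis
        using twisted_class_proper_coset(1)[OF A that b rep(4)[OF True]] unfolding Fm_def by blast
    qed (use that in \<open>auto simp: Cs_def\<close>)
    then show "A \<subseteq> centralizer_in G A b \<union> (\<Union>(g, L) \<in> Fm. L #> g)"
      using twisted_class_cover[OF AC inv_A b] by blast
  qed
  moreover have "subgroup (centralizer_in G A b) G" using subgroup_centralizer_in[OF A b(1)] .
  moreover have "centralizer_in G A b \<subseteq> A" unfolding centralizer_in_def by blast
  ultimately show ?thesis using strong_neumann_lemma[OF A] by blast
qed

lemma centralizer_of_finite_set_finitely_covered: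
  assumes A: "subgroup A G" and inv_A: "\<And>a. a \<in> A \<Longrightarrow> nu a = inv a"
    and fin: "finite {c \<in> carrier G. nu c = c}"
    and S: "finite S" "S \<subseteq> carrier G" "\<And>s. s \<in> S \<Longrightarrow> nu s = inv s"
  shows "subgroup (A \<inter> \<Inter>(centralizer_in G A ` S)) G
    \<and> finitely_covered G A (A \<inter> \<Inter>(centralizer_in G A ` S))"
proof (rule finitely_covered_Inter[OF A S(1)])
  fix s assume "s \<in> S"
  then have s: "s \<in> carrier G" "nu s = inv s" using S(2,3) by auto
  show "subgroup (centralizer_in G A s) G \<and> finitely_covered G A (centralizer_in G A s)"
    using subgroup_centralizer_in[OF A s(1)] centralizer_finitely_covered[OF A inv_A s fin] by blast
qed

end

lemma uniquely_2_divisible_involutionI: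
  assumes "group U" "uniquely_2_divisible U" "involutory_aut U \<nu>"
  shows "uniquely_2_divisible_involution U \<nu>"
proof -
  interpret group U by fact
  show ?thesis
  proof unfold_locales
    show "\<nu> \<in> hom U U" using assms(3) unfolding involutory_aut_def iso_def by blast
    show "\<And>x. x \<in> carrier U \<Longrightarrow> \<nu> (\<nu> x) = x" using assms(3) unfolding involutory_aut_def by blast
  qed (fact assms(2))
qed

theorem lemma3p2:
  fixes U (structure) and \<nu> :: "'a \<Rightarrow> 'a" and A B :: "'a set"
  assumes "group U"
    and "infinite (carrier U)"
    and "uniquely_2_divisible U"
    and "involutory_aut U \<nu>"
    and "almost_regular U \<nu>"
    and "abelian_subgroup A U" and "infinite A" and "inverted_by U \<nu> A"
    and "\<And>C. abelian_subgroup C U \<Longrightarrow> inverted_by U \<nu> C \<Longrightarrow> A \<subseteq> C \<Longrightarrow> C = A"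
    and "abelian_subgroup B U" and "finitely_generated_subgroup B U" and "inverted_by U \<nu> B"
  shows "\<exists>A1. subgroup A1 U \<and> A1 \<subseteq> A \<and> finite_index_in A1 A U
           \<and> abelian_subgroup (generate U (A1 \<union> B)) U"
proof -
  interpret uniquely_2_divisible_involution U \<nu>
    using uniquely_2_divisible_involutionI[OF assms(1,3,4)] .
  have A: "subgroup A U" using assms(6) unfolding abelian_subgroup_def by blast
  obtain S where S: "finite S" "S \<subseteq> carrier U" "B = generate U S"
    using assms(11) unfolding finitely_generated_subgroup_def by blast
  have "s \<in> B" if "s \<in> S" for s unfolding S(3) using that by (rule generate.incl)
  then have inv_S: "\<And>s. s \<in> S \<Longrightarrow> \<nu> s = inv s" using assms(12) unfolding inverted_by_def by blast
  define A1 where "A1 = A \<inter> \<Inter>(centralizer_in U A ` S)"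
  have A1: "subgroup A1 U \<and> finitely_covered U A A1" unfolding A1_def
    using centralizer_of_finite_set_finitely_covered[OF A _ _ S(1,2) inv_S] assms(5,8)
    unfolding inverted_by_def almost_regular_def by blast
  have A1A: "A1 \<subseteq> A" unfolding A1_def by blast
  have "abelian_subgroup A1 U" using A1 A1A assms(6) unfolding abelian_subgroup_def by blast
  moreover have "a \<otimes> s = s \<otimes> a" if "a \<in> A1" "s \<in> S" for a s
    using that unfolding A1_def centralizer_in_def by (blast intro: sym)
  ultimately have "abelian_subgroup (generate U (A1 \<union> B)) U"
    using abelian_join[OF _ _ S(2)] assms(10) unfolding S(3) by blast
  moreover have "finite_index_in A1 A U"
    using finitely_covered_imp_finite_index[OF _ subgroup.subset[OF A]] A1 by blast
  ultimately show ?thesis using A1 A1A by blast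
qed

end
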